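(* Let $\widehat{\mathbf M}\otimes\mathcal A_\psi$ be the product of a gMDP $\widehat{\mathbf M}$ (state space $\hat{\mathbb X}$, input space $\hat{\mathbb U}$) with the DFA $\mathcal A_\psi=(Q,q_0,\Sigma,F,\tau)$, and let $\delta>0$. Let $V^*_\infty:=\lim_{l\to\infty}(\mathbf T^*_\delta)^l(V_0)$ with $V_0=0$. Let $\mu^*:\hat{\mathbb X}\times Q\to\mathcal P(\hat{\mathbb U})$ be a universally measurable map with $\mu^*\in\arg\sup_\mu\mathbf T^\mu_\delta(V^*_\infty)$, i.e. $\mathbf T^{\mu^*}_\delta(V^*_\infty)=\mathbf T^*_\delta(V^*_\infty)$. Then the stationary Markov policy $(\mu^*,\mu^*,\dots)$ is an optimal $(0,\delta)$-robust policy in the sense that $$V^*_\infty=\lim_{l\to\infty}(\mathbf T^{\mu^*}_\delta)^l(V_0),\qquad V_0=0.$$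
   Context: A gMDP is a tuple $\widehat{\mathbf M}=(\hat{\mathbb X},\hat{\mathbb U},\mathbb Y,\hat x_0,\hat{\mathbf t},\hat h)$ with Polish state space $\hat{\mathbb X}$, Polish input space $\hat{\mathbb U}$, metric output space $(\mathbb Y,\mathbf d_{\mathbb Y})$, initial state $\hat x_0$, stochastic kernel $\hat{\mathbf t}(\cdot\mid\hat x,\hat u)$ on $\hat{\mathbb X}$, and measurable output map $\hat h$. $\mathsf{AP}$ is a finite set of atomic propositions, $\Sigma=2^{\mathsf{AP}}$, $\mathsf L:\mathbb Y\to\Sigma$ a measurable labelling function; $\psi$ is an scLTL formula and $\mathcal A_\psi=(Q,q_0,\Sigma,F,\tau)$ a deterministic finite automaton (finite $Q$, accepting set $F$, transition $\tau:Q\times\Sigma\to Q$) accepting exactly the words satisfying $\psi$. The product $\widehat{\mathbf M}\otimes\mathcal A_\psi$ has states $\hat{\mathbb X}\times Q$, inputs $\hat{\mathbb U}$, and kernel $\bar{\mathbf t}(d\hat x'\times\{q'\}\mid\hat x,q,u)=\mathbf 1_{\{q'\}}(\tau(q,\mathsf L(\hat h(\hat x'))))\,\hat{\mathbf t}(d\hat x'\mid\hat x,u)$. For a universally measurable $\mu:\hat{\mathbb X}\times Q\to\mathcal P(\hat{\mathbb U})$ and $V:\hat{\mathbb X}\times Q\to[0,1]$: $\mathbf T^\mu(V)(\hat x,q)=\int\max\{\mathbf 1_F(q'),V(\hat x',q')\}\,\bar{\mathbf t}(d\hat x'\times\{q'\}\mid\hat x,q,\mu(\hat x,q))$; $\mathbf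 T^\mu_\delta(V)=\mathbf L(\mathbf T^\mu(V)-\delta)$ with $\mathbf L(r)=\min(1,\max(0,r))$; and $\mathbf T^*_\delta(V)=\sup_\mu\mathbf T^\mu_\delta(V)$ (pointwise). *)

theory Defs
  imports "HOL-Probability.Probability"
begin

definition univ_meas :: "'a measure \<Rightarrow> 'b measure \<Rightarrow> ('a \<Rightarrow> 'b) \<Rightarrow> bool" where
  "univ_meas M N f \<longleftrightarrow>
     (\<forall>P. sets P = sets M \<longrightarrow> prob_space P \<longrightarrow> f \<in> completion P \<rightarrow>\<^sub>M N)"

definition XQ :: "('x::topological_space \<times> 'q) measure" where
  "XQ = (borel :: 'x measure) \<Otimes>\<^sub>M count_space UNIV"

definition policy :: "('x::topological_space \<times> 'q \<Rightarrow> 'u::topological_space measure) \<Rightarrow> bool" where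
  "policy \<mu> \<longleftrightarrow> univ_meas XQ (prob_algebra borel) \<mu>"

definition clip :: "real \<Rightarrow> real" where
  "clip r = min 1 (max 0 r)"

text \<open>Kernel t (of the gMDP), output map h,
  labelling Lab, DFA transition tau, accepting set F.  Integrals are taken w.r.t. the
  completions of the measures (integrands are universally measurable).\<close>
definition Tmu ::
  "('x \<Rightarrow> 'u \<Rightarrow> 'x measure) \<Rightarrow> ('x \<Rightarrow> 'y) \<Rightarrow> ('y \<Rightarrow> 'ap set) \<Rightarrow> ('q \<Rightarrow> 'ap set \<Rightarrow> 'q)
   \<Rightarrow> 'q set \<Rightarrow> ('x \<times> 'q \<Rightarrow> 'u measure) \<Rightarrow> ('x \<times> 'q \<Rightarrow> real) \<Rightarrow> ('x \<times> 'q \<Rightarrow> real)" where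
  "Tmu t h Lab \<tau> F \<mu> V = (\<lambda>(x, q).
     enn2real (\<integral>\<^sup>+ u. (\<integral>\<^sup>+ x'. ennreal (max (indicator F (\<tau> q (Lab (h x'))))
                                              (V (x', \<tau> q (Lab (h x')))))
                          \<partial>completion (t x u))
              \<partial>completion (\<mu> (x, q))))"

definition Tmu_delta ::
  "('x \<Rightarrow> 'u \<Rightarrow> 'x measure) \<Rightarrow> ('x \<Rightarrow> 'y) \<Rightarrow> ('y \<Rightarrow> 'ap set) \<Rightarrow> ('q \<Rightarrow> 'ap set \<Rightarrow> 'q)
   \<Rightarrow> 'q set \<Rightarrow> real \<Rightarrow> ('x \<times> 'q \<Rightarrow> 'u measure) \<Rightarrow> ('x \<times> 'q \<Rightarrow> real) \<Rightarrow> ('x \<times> 'q \<Rightarrow> real)" where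
  "Tmu_delta t h Lab \<tau> F \<delta> \<mu> V = (\<lambda>z. clip (Tmu t h Lab \<tau> F \<mu> V z - \<delta>))"

definition Tstar_delta ::
  "('x::topological_space \<Rightarrow> 'u::topological_space \<Rightarrow> 'x measure) \<Rightarrow> ('x \<Rightarrow> 'y) \<Rightarrow> ('y \<Rightarrow> 'ap set)
   \<Rightarrow> ('q \<Rightarrow> 'ap set \<Rightarrow> 'q) \<Rightarrow> 'q set \<Rightarrow> real \<Rightarrow> ('x \<times> 'q \<Rightarrow> real) \<Rightarrow> ('x \<times> 'q \<Rightarrow> real)" where
  "Tstar_delta t h Lab \<tau> F \<delta> V = (\<lambda>z. SUP \<mu>\<in>{\<mu>. policy \<mu>}. Tmu_delta t h Lab \<tau> F \<delta> \<mu> V z)"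

end

theory Submission
  imports Defs
begin

(* The iterates (T*_delta)^l 0 increase to V*; hence V* <= T*_delta V* = T^mu*_delta V*, and by
   monotonicity the iterates (T^mu*_delta)^l 0 stay below (T*_delta)^l 0 <= V*.  For the matching
   lower bound, T^mu is monotone and satisfies T^mu (c + (1 - c) V) <= c + (1 - c) T^mu V, because
   max(i, c + (1 - c) v) <= c + (1 - c) max(i, v) for i in {0, 1} and integrals against
   probability measures respect affine bounds.  Combined with the shift by delta, this turns
   V* <= c + (1 - c) W into V* <= c' + (1 - c') T^mu*_delta W with c' = (1 - min delta 1) c,
   so V* - (1 - min delta 1)^n <= (T^mu*_delta)^n 0 <= V*.
   The value functions need not be measurable, so all integrals are lower integrals. *)

(* No measurability of f is needed: the estimate is carried out on the simple functions below
   the integrand. *)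
lemma nn_integral_affine_le:
  fixes a k :: ennreal
  assumes M: "prob_space M" and a: "a < top" and k: "k < top"
  shows "(\<integral>\<^sup>+x. a * f x + k \<partial>M) \<le> a * integral\<^sup>N M f + k"
proof (cases "a = 0")
  case True
  then show ?thesis using M by (simp add: prob_space.emeasure_space_1)
next
  case False
  show ?thesis
    unfolding nn_integral_def[of M "\<lambda>x. a * f x + k"]
  proof (rule SUP_least, clarify)
    fix g assume g: "simple_function M g" "g \<le> (\<lambda>x. a * f x + k)"
    define g' where "g' x = (g x - k) / a" for x
    have g': "simple_function M g'"
      unfolding g'_def using g(1) by (rule simple_function_compose1)
    have a_g': "a * g' x = g x - k" for x
      using False a by (simp add: g'_def ennreal_times_divide mult.commute[of a] ennreal_mult_divide_eq)
    have "g' \<le> f"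
    proof (rule le_funI)
      fix x
      have "a * g' x \<le> a * f x"
        using g(2) k by (auto simp: a_g' le_fun_def ennreal_minus_le_iff add.commute)
      then show "g' x \<le> f x"
        using False a by (simp add: ennreal_mult_le_mult_iff)
    qed
    have "integral\<^sup>S M g \<le> (\<integral>\<^sup>Sx. a * g' x + k \<partial>M)"
      using g(1) simple_function_compose1[OF g', of "\<lambda>y. a * y + k"]
      by (intro simple_integral_mono) (auto simp: a_g' diff_add_self_ennreal)
    also have "\<dots> = a * integral\<^sup>S M g' + k"
      using g' M by (simp add: prob_space.emeasure_space_1)
    also have "\<dots> \<le> a * integral\<^sup>N M f + k"
      using g' \<open>g' \<le> f\<close> unfolding nn_integral_def
      by (intro add_right_mono mult_left_mono SUP_upper) auto
    finally show "integral\<^sup>S M g \<le> a * integral\<^sup>N M f + k" .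
  qed
qed

definition mixture_expectation :: "'u measure \<Rightarrow> ('u \<Rightarrow> 'x measure) \<Rightarrow> ('x \<Rightarrow> real) \<Rightarrow> real" where
  "mixture_expectation M K f = enn2real (\<integral>\<^sup>+u. (\<integral>\<^sup>+y. ennreal (f y) \<partial>K u) \<partial>M)"

context
  fixes M :: "'u measure" and K :: "'u \<Rightarrow> 'x measure"
  assumes M: "prob_space M" and K: "\<And>u. prob_space (K u)"
begin

lemma mixture_nn_integral_le_1:
  fixes f :: "'x \<Rightarrow> real"
  assumes "\<And>y. f y \<le> 1"
  shows "(\<integral>\<^sup>+u. (\<integral>\<^sup>+y. ennreal (f y) \<partial>K u) \<partial>M) \<le> 1"
proof -
  have "(\<integral>\<^sup>+y. ennreal (f y) \<partial>K u) \<le> 1" for u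
    using K assms by (intro subprob_space.nn_integral_le_const prob_space_imp_subprob_space) auto
  with M show ?thesis
    by (intro subprob_space.nn_integral_le_const prob_space_imp_subprob_space) auto
qed

lemma mixture_expectation_le_1:
  assumes "\<And>y. f y \<le> 1"
  shows "mixture_expectation M K f \<le> 1"
  unfolding mixture_expectation_def using mixture_nn_integral_le_1[of f, OF assms]
  by (intro enn2real_leI) auto

lemma mixture_expectation_mono:
  assumes "\<And>y. f y \<le> g y" and "\<And>y. g y \<le> 1"
  shows "mixture_expectation M K f \<le> mixture_expectation M K g"
  unfolding mixture_expectation_def
proof (rule enn2real_mono)
  show "(\<integral>\<^sup>+u. (\<integral>\<^sup>+y. ennreal (f y) \<partial>K u) \<partial>M) \<le> (\<integral>\<^sup>+u. (\<integral>\<^sup>+y. ennreal (g y) \<partial>K u) \<partial>M)"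
    using assms(1) by (intro nn_integral_mono ennreal_leI)
  show "(\<integral>\<^sup>+u. (\<integral>\<^sup>+y. ennreal (g y) \<partial>K u) \<partial>M) < top"
    using mixture_nn_integral_le_1[of g, OF assms(2)] by (simp add: le_less_trans)
qed

lemma mixture_expectation_affine_le:
  assumes c: "0 \<le> c" "c \<le> 1" and f: "\<And>y. 0 \<le> f y" "\<And>y. f y \<le> 1"
  shows "mixture_expectation M K (\<lambda>y. c + (1 - c) * f y) \<le> c + (1 - c) * mixture_expectation M K f"
proof -
  let ?I = "\<lambda>f. \<integral>\<^sup>+u. (\<integral>\<^sup>+y. ennreal (f y) \<partial>K u) \<partial>M"
  have affine: "ennreal (c + (1 - c) * f y) = ennreal (1 - c) * ennreal (f y) + ennreal c" for y
    using c f by (simp add: ennreal_plus ennreal_mult)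
  have "?I (\<lambda>y. c + (1 - c) * f y)
     \<le> (\<integral>\<^sup>+u. ennreal (1 - c) * (\<integral>\<^sup>+y. ennreal (f y) \<partial>K u) + ennreal c \<partial>M)"
    unfolding affine using K by (intro nn_integral_mono nn_integral_affine_le) auto
  also have "\<dots> \<le> ennreal (1 - c) * ?I f + ennreal c"
    using M by (rule nn_integral_affine_le) auto
  finally have le: "?I (\<lambda>y. c + (1 - c) * f y) \<le> ennreal (1 - c) * ?I f + ennreal c" .
  have fin: "?I f < top"
    using mixture_nn_integral_le_1[of f, OF f(2)] by (simp add: le_less_trans)
  have "mixture_expectation M K (\<lambda>y. c + (1 - c) * f y) \<le> enn2real (ennreal (1 - c) * ?I f + ennreal c)"
    unfolding mixture_expectation_def using le fin by (intro enn2real_mono) (auto simp: ennreal_mult_less_top)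
  also have "\<dots> = c + (1 - c) * mixture_expectation M K f"
    using fin c by (simp add: mixture_expectation_def enn2real_plus enn2real_mult ennreal_mult_less_top)
  finally show ?thesis .
qed

end

lemma clip_contraction_step:
  fixes a d \<delta> p s v :: real
  assumes a: "0 \<le> a" "a \<le> 1" and d: "0 < d" "d \<le> \<delta>" "d \<le> 1" and p: "p \<le> 1"
    and s: "s \<le> a + (1 - a) * p" and v: "v \<le> clip (s - \<delta>)"
  shows "v \<le> (1 - d) * a + (1 - (1 - d) * a) * clip (p - \<delta>)"
proof -
  have v_le: "v \<le> max 0 (s - \<delta>)"
    using v by (simp add: clip_def)
  have da: "0 \<le> (1 - d) * a" "(1 - d) * a \<le> 1"
    using a d by (auto intro: mult_le_one)
  show ?thesis
  proof (cases "p \<le> \<delta>")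
    case True
    have "(1 - a) * p \<le> (1 - a) * \<delta>"
      using True a by (intro mult_left_mono) auto
    moreover have "(1 - \<delta>) * a \<le> (1 - d) * a"
      using a d by (intro mult_right_mono) auto
    ultimately have "s - \<delta> \<le> (1 - d) * a"
      using s by (simp add: algebra_simps)
    then have "v \<le> (1 - d) * a"
      using v_le da by simp
    also have "\<dots> \<le> (1 - d) * a + (1 - (1 - d) * a) * clip (p - \<delta>)"
      using da by (simp add: clip_def)
    finally show ?thesis .
  next
    case False
    then have clip_p: "clip (p - \<delta>) = p - \<delta>"
      using p d by (simp add: clip_def)
    have "0 \<le> a * (\<delta> - d)" "0 \<le> d * a * (p - \<delta>)"
      using a d False by simp_all
    then have "s - \<delta> \<le> (1 - d) * a + (1 - (1 - d) * a) * (p - \<delta>)"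
      using s by (simp add: algebra_simps)
    moreover have "0 \<le> (1 - d) * a + (1 - (1 - d) * a) * (p - \<delta>)"
      using da False by simp
    ultimately show ?thesis
      using v_le clip_p by simp
  qed
qed

locale mono_unit_operator =
  fixes T :: "('z \<Rightarrow> real) \<Rightarrow> 'z \<Rightarrow> real"
  assumes nonneg: "0 \<le> T V z"
    and le_1: "T V z \<le> 1"
    and mono: "(\<And>z. V z \<le> V' z) \<Longrightarrow> (\<And>z. V' z \<le> 1) \<Longrightarrow> T V z \<le> T V' z"
begin

lemma iterate_nonneg: "0 \<le> (T ^^ n) (\<lambda>_. 0) z"
  by (cases n) (simp_all add: nonneg)

lemma iterate_le_1: "(T ^^ n) (\<lambda>_. 0) z \<le> 1"
  by (cases n) (simp_all add: le_1)

lemma incseq_iterate: "incseq (\<lambda>n. (T ^^ n) (\<lambda>_. 0) z)"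
proof -
  have "(T ^^ n) (\<lambda>_. 0) z \<le> (T ^^ Suc n) (\<lambda>_. 0) z" for n z
  proof (induction n arbitrary: z)
    case 0
    show ?case by (simp add: nonneg)
  next
    case (Suc n)
    have "T ((T ^^ n) (\<lambda>_. 0)) z \<le> T ((T ^^ Suc n) (\<lambda>_. 0)) z"
      using Suc.IH iterate_le_1 by (rule mono)
    then show ?case by simp
  qed
  then show ?thesis by (intro incseq_SucI)
qed

lemma bdd_above_iterate: "bdd_above (range (\<lambda>n. (T ^^ n) (\<lambda>_. 0) z))"
  using iterate_le_1 by (intro bdd_aboveI) auto

lemma lim_iterate_eq_SUP: "lim (\<lambda>n. (T ^^ n) (\<lambda>_. 0) z) = (SUP n. (T ^^ n) (\<lambda>_. 0) z)"
  using incseq_iterate bdd_above_iterate by (intro limI LIMSEQ_incseq_SUP)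

lemma iterate_le_lim: "(T ^^ n) (\<lambda>_. 0) z \<le> lim (\<lambda>n. (T ^^ n) (\<lambda>_. 0) z)"
  unfolding lim_iterate_eq_SUP by (intro cSUP_upper bdd_above_iterate) simp

lemma lim_iterate_le_1: "lim (\<lambda>n. (T ^^ n) (\<lambda>_. 0) z) \<le> 1"
  unfolding lim_iterate_eq_SUP using iterate_le_1 by (intro cSUP_least) auto

lemma lim_iterate_le_step:
  "lim (\<lambda>n. (T ^^ n) (\<lambda>_. 0) z) \<le> T (\<lambda>z. lim (\<lambda>n. (T ^^ n) (\<lambda>_. 0) z)) z"
  unfolding lim_iterate_eq_SUP[of z]
proof (rule cSUP_least)
  fix n
  have "(T ^^ n) (\<lambda>_. 0) z \<le> (T ^^ Suc n) (\<lambda>_. 0) z"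
    using incseq_iterate by (simp add: incseq_Suc_iff)
  also have "\<dots> \<le> T (\<lambda>z. lim (\<lambda>n. (T ^^ n) (\<lambda>_. 0) z)) z"
    using iterate_le_lim lim_iterate_le_1 by (simp add: mono)
  finally show "(T ^^ n) (\<lambda>_. 0) z \<le> T (\<lambda>z. lim (\<lambda>n. (T ^^ n) (\<lambda>_. 0) z)) z" .
qed simp

end

lemma iterate_le_iterate:
  assumes G: "mono_unit_operator G" and S: "mono_unit_operator S"
    and le: "\<And>V z. G V z \<le> S V z"
  shows "(G ^^ n) (\<lambda>_. 0) z \<le> (S ^^ n) (\<lambda>_. 0) z"
proof (induction n arbitrary: z)
  case 0
  show ?case by simp
next
  case (Suc n)
  have "G ((G ^^ n) (\<lambda>_. 0)) z \<le> G ((S ^^ n) (\<lambda>_. 0)) z"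
    using Suc.IH mono_unit_operator.iterate_le_1[OF S] by (intro mono_unit_operator.mono[OF G])
  also have "\<dots> \<le> S ((S ^^ n) (\<lambda>_. 0)) z"
    by (rule le)
  finally show ?case by simp
qed

locale robust_operator =
  fixes T :: "('z \<Rightarrow> real) \<Rightarrow> 'z \<Rightarrow> real" and \<delta> :: real
  assumes delta_pos: "0 < \<delta>"
    and le_1: "(\<And>z. V z \<le> 1) \<Longrightarrow> T V z \<le> 1"
    and mono: "(\<And>z. V z \<le> V' z) \<Longrightarrow> (\<And>z. V' z \<le> 1) \<Longrightarrow> T V z \<le> T V' z"
    and affine_le: "0 \<le> c \<Longrightarrow> c \<le> 1 \<Longrightarrow> (\<And>z. 0 \<le> V z) \<Longrightarrow> (\<And>z. V z \<le> 1) \<Longrightarrow>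
      T (\<lambda>z. c + (1 - c) * V z) z \<le> c + (1 - c) * T V z"
begin

definition robust :: "('z \<Rightarrow> real) \<Rightarrow> 'z \<Rightarrow> real" where
  "robust V z = clip (T V z - \<delta>)"

sublocale robust: mono_unit_operator robust
proof
  fix V V' :: "'z \<Rightarrow> real" and z
  show "0 \<le> robust V z" "robust V z \<le> 1"
    by (simp_all add: robust_def clip_def)
  assume "\<And>z. V z \<le> V' z" "\<And>z. V' z \<le> 1"
  then have "T V z \<le> T V' z" by (rule mono)
  then show "robust V z \<le> robust V' z"
    by (simp add: robust_def clip_def)
qed

lemma iterate_lower_bound:
  assumes post: "\<And>z. V z \<le> robust V z"
  shows "V z \<le> (1 - min \<delta> 1) ^ n + (1 - (1 - min \<delta> 1) ^ n) * (robust ^^ n) (\<lambda>_. 0) z"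
proof (induction n arbitrary: z)
  case 0
  show ?case using post[of z] robust.le_1[of V z] by simp
next
  case (Suc n)
  let ?a = "(1 - min \<delta> 1) ^ n" and ?W = "(robust ^^ n) (\<lambda>_. 0)"
  have a: "0 \<le> ?a" "?a \<le> 1"
    using delta_pos by (simp_all add: power_le_one)
  have "T V z \<le> T (\<lambda>z. ?a + (1 - ?a) * ?W z) z"
  proof (rule mono)
    show "?a + (1 - ?a) * ?W z \<le> 1" for z
      using a robust.iterate_le_1[of n z] mult_left_mono[of "?W z" 1 "1 - ?a"] by simp
  qed (rule Suc.IH)
  also have "\<dots> \<le> ?a + (1 - ?a) * T ?W z"
    using a robust.iterate_nonneg robust.iterate_le_1 by (rule affine_le)
  finally have "T V z \<le> ?a + (1 - ?a) * T ?W z" .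
  moreover have "T ?W z \<le> 1"
    using robust.iterate_le_1 by (rule le_1)
  moreover have "V z \<le> clip (T V z - \<delta>)"
    using post by (simp add: robust_def)
  ultimately have "V z \<le> (1 - min \<delta> 1) * ?a + (1 - (1 - min \<delta> 1) * ?a) * clip (T ?W z - \<delta>)"
    using a delta_pos by (intro clip_contraction_step) auto
  then show ?case unfolding funpow.simps comp_apply robust_def[of ?W] power_Suc .
qed

lemma iterate_tendsto:
  assumes post: "\<And>z. V z \<le> robust V z" and upper: "\<And>n z. (robust ^^ n) (\<lambda>_. 0) z \<le> V z"
  shows "(\<lambda>n. (robust ^^ n) (\<lambda>_. 0) z) \<longlonglongrightarrow> V z"
proof (rule tendsto_sandwich)
  let ?c = "\<lambda>n. (1 - min \<delta> 1) ^ n"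
  have "V z - ?c n \<le> (robust ^^ n) (\<lambda>_. 0) z" for n
  proof -
    have "0 \<le> ?c n * (robust ^^ n) (\<lambda>_. 0) z"
      using delta_pos robust.iterate_nonneg by simp
    then show ?thesis
      using iterate_lower_bound[OF post, of z n] by (simp add: algebra_simps)
  qed
  then show "\<forall>\<^sub>F n in sequentially. V z - ?c n \<le> (robust ^^ n) (\<lambda>_. 0) z"
    by simp
  show "\<forall>\<^sub>F n in sequentially. (robust ^^ n) (\<lambda>_. 0) z \<le> V z"
    using upper by simp
  have "?c \<longlonglongrightarrow> 0"
    using delta_pos by (intro LIMSEQ_power_zero) auto
  then show "(\<lambda>n. V z - ?c n) \<longlonglongrightarrow> V z"
    using tendsto_diff[OF tendsto_const] by fastforce
qed simp

end

lemma policy_prob_space: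
  assumes "policy \<mu>"
  shows "prob_space (\<mu> z)"
proof -
  have space: "space XQ = UNIV"
    by (simp add: XQ_def space_pair_measure)
  then have "prob_space (return XQ z)"
    by (intro prob_space_return) auto
  with assms have "\<mu> \<in> completion (return XQ z) \<rightarrow>\<^sub>M prob_algebra borel"
    unfolding policy_def univ_meas_def by auto
  then have "\<mu> z \<in> space (prob_algebra borel)"
    by (rule measurable_space) (simp add: space)
  then show ?thesis
    by (simp add: space_prob_algebra)
qed

lemma prob_space_kernel:
  assumes "(\<lambda>(x, u). t x u) \<in> M \<rightarrow>\<^sub>M prob_algebra N" and "(x, u) \<in> space M"
  shows "prob_space (t x u)"
  using measurable_space[OF assms] by (simp add: space_prob_algebra)

lemma Tmu_eq_mixture_expectation:
  "Tmu t h Lab \<tau> F \<mu> V (x, q) =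
     mixture_expectation (completion (\<mu> (x, q))) (\<lambda>u. completion (t x u))
       (\<lambda>x'. max (indicator F (\<tau> q (Lab (h x')))) (V (x', \<tau> q (Lab (h x')))))"
  by (simp add: Tmu_def mixture_expectation_def)

lemma max_indicator_affine_le:
  fixes c v :: real
  assumes "0 \<le> c" "c \<le> 1" "v \<le> 1"
  shows "max (indicator A a) (c + (1 - c) * v) \<le> c + (1 - c) * max (indicator A a) v"
proof -
  have "(1 - c) * v \<le> 1 - c"
    using assms mult_left_mono[of v 1 "1 - c"] by simp
  then show ?thesis
    using assms by (cases "a \<in> A") (auto intro: mult_left_mono)
qed

context
  fixes t :: "'x \<Rightarrow> 'u \<Rightarrow> 'x measure" and \<mu> :: "'x \<times> 'q \<Rightarrow> 'u measure"
  assumes PT: "\<And>x u. prob_space (t x u)" and PM: "\<And>z. prob_space (\<mu> z)"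
begin

lemma prob_space_completion_policy: "prob_space (completion (\<mu> z))"
  and prob_space_completion_kernel: "prob_space (completion (t x u))"
  using PM PT by (simp_all add: prob_space.prob_space_completion)

lemma Tmu_le_1:
  assumes "\<And>z. V z \<le> 1"
  shows "Tmu t h Lab \<tau> F \<mu> V z \<le> 1"
proof -
  obtain x q where z: "z = (x, q)" by (cases z)
  show ?thesis
    unfolding z Tmu_eq_mixture_expectation using assms
    by (intro mixture_expectation_le_1 prob_space_completion_policy prob_space_completion_kernel)
      (simp add: indicator_def)
qed

lemma Tmu_mono:
  assumes le: "\<And>z. V z \<le> V' z" and V': "\<And>z. V' z \<le> 1"
  shows "Tmu t h Lab \<tau> F \<mu> V z \<le> Tmu t h Lab \<tau> F \<mu> V' z"
proof -
  obtain x q where z: "z = (x, q)" by (cases z)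
  show ?thesis
    unfolding z Tmu_eq_mixture_expectation using le V' order_trans[OF le V']
    by (intro mixture_expectation_mono prob_space_completion_policy prob_space_completion_kernel)
      (auto simp: indicator_def intro: max.coboundedI2)
qed

lemma Tmu_affine_le:
  assumes c: "0 \<le> c" "c \<le> 1" and V: "\<And>z. 0 \<le> V z" "\<And>z. V z \<le> 1"
  shows "Tmu t h Lab \<tau> F \<mu> (\<lambda>z. c + (1 - c) * V z) z \<le> c + (1 - c) * Tmu t h Lab \<tau> F \<mu> V z"
proof -
  obtain x q where z: "z = (x, q)" by (cases z)
  let ?M = "completion (\<mu> (x, q))" and ?K = "\<lambda>u. completion (t x u)"
  let ?Y = "\<lambda>x'. max (indicator F (\<tau> q (Lab (h x')))) (V (x', \<tau> q (Lab (h x'))))"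
  have Y: "0 \<le> ?Y x'" "?Y x' \<le> 1" for x'
    using V by (auto simp: indicator_def)
  have "Tmu t h Lab \<tau> F \<mu> (\<lambda>z. c + (1 - c) * V z) z
      \<le> mixture_expectation ?M ?K (\<lambda>x'. c + (1 - c) * ?Y x')"
    unfolding z Tmu_eq_mixture_expectation
  proof (intro mixture_expectation_mono prob_space_completion_policy prob_space_completion_kernel)
    fix x'
    show "max (indicator F (\<tau> q (Lab (h x')))) (c + (1 - c) * V (x', \<tau> q (Lab (h x'))))
        \<le> c + (1 - c) * ?Y x'"
      using c V by (intro max_indicator_affine_le)
    show "c + (1 - c) * ?Y x' \<le> 1"
      using c mult_left_mono[OF Y(2)[of x'], of "1 - c"] by simp
  qed
  also have "\<dots> \<le> c + (1 - c) * Tmu t h Lab \<tau> F \<mu> V z"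
    unfolding z Tmu_eq_mixture_expectation using c Y
    by (intro mixture_expectation_affine_le prob_space_completion_policy prob_space_completion_kernel)
  finally show ?thesis .
qed

lemma robust_operator_Tmu: "0 < \<delta> \<Longrightarrow> robust_operator (Tmu t h Lab \<tau> F \<mu>) \<delta>"
  by unfold_locales (auto intro: Tmu_le_1 Tmu_mono Tmu_affine_le)

end

lemma Tmu_delta_eq_robust:
  assumes "robust_operator (Tmu t h Lab \<tau> F \<mu>) \<delta>"
  shows "Tmu_delta t h Lab \<tau> F \<delta> \<mu> = robust_operator.robust (Tmu t h Lab \<tau> F \<mu>) \<delta>"
  by (intro ext) (simp add: Tmu_delta_def robust_operator.robust_def[OF assms])

lemma Tmu_delta_le_Tstar_delta:
  assumes "policy \<mu>"
  shows "Tmu_delta t h Lab \<tau> F \<delta> \<mu> V z \<le> Tstar_delta t h Lab \<tau> F \<delta> V z"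
  unfolding Tstar_delta_def using assms
  by (intro cSUP_upper bdd_aboveI[where M = 1]) (auto simp: Tmu_delta_def clip_def)

lemma mono_unit_operator_Tstar_delta:
  fixes t :: "'x::topological_space \<Rightarrow> 'u::topological_space \<Rightarrow> 'x measure"
    and \<tau> :: "'q \<Rightarrow> 'ap set \<Rightarrow> 'q" and \<mu>\<^sub>0 :: "'x \<times> 'q \<Rightarrow> 'u measure"
  assumes PT: "\<And>x u. prob_space (t x u)" and "policy \<mu>\<^sub>0"
  shows "mono_unit_operator (Tstar_delta t h Lab \<tau> F \<delta>)"
proof
  fix V V' :: "'x \<times> 'q \<Rightarrow> real" and z :: "'x \<times> 'q"
  show "0 \<le> Tstar_delta t h Lab \<tau> F \<delta> V z"
  proof -
    have "0 \<le> Tmu_delta t h Lab \<tau> F \<delta> \<mu>\<^sub>0 V z"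
      by (simp add: Tmu_delta_def clip_def)
    also have "\<dots> \<le> Tstar_delta t h Lab \<tau> F \<delta> V z"
      using \<open>policy \<mu>\<^sub>0\<close> by (rule Tmu_delta_le_Tstar_delta)
    finally show ?thesis .
  qed
  show "Tstar_delta t h Lab \<tau> F \<delta> V z \<le> 1"
    unfolding Tstar_delta_def using \<open>policy \<mu>\<^sub>0\<close>
    by (intro cSUP_least) (auto simp: Tmu_delta_def clip_def)
  assume le: "\<And>z. V z \<le> V' z" and V': "\<And>z. V' z \<le> 1"
  show "Tstar_delta t h Lab \<tau> F \<delta> V z \<le> Tstar_delta t h Lab \<tau> F \<delta> V' z"
    unfolding Tstar_delta_def[of t h Lab \<tau> F \<delta> V]
  proof (rule cSUP_least)
    fix \<mu> :: "'x \<times> 'q \<Rightarrow> 'u measure"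
    assume "\<mu> \<in> {\<mu>. policy \<mu>}"
    then have \<mu>: "policy \<mu>" by simp
    have "Tmu t h Lab \<tau> F \<mu> V z \<le> Tmu t h Lab \<tau> F \<mu> V' z"
      using Tmu_mono[OF PT policy_prob_space[OF \<mu>] le V'] .
    then have "Tmu_delta t h Lab \<tau> F \<delta> \<mu> V z \<le> Tmu_delta t h Lab \<tau> F \<delta> \<mu> V' z"
      by (simp add: Tmu_delta_def clip_def)
    also have "\<dots> \<le> Tstar_delta t h Lab \<tau> F \<delta> V' z"
      using \<mu> by (rule Tmu_delta_le_Tstar_delta)
    finally show "Tmu_delta t h Lab \<tau> F \<delta> \<mu> V z \<le> Tstar_delta t h Lab \<tau> F \<delta> V' z" .
  qed (use \<open>policy \<mu>\<^sub>0\<close> in auto)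
qed

theorem theorem1:
  fixes t :: "'x::polish_space \<Rightarrow> 'u::polish_space \<Rightarrow> 'x measure"
    and h :: "'x \<Rightarrow> 'y::metric_space"
    and Lab :: "'y \<Rightarrow> 'ap::finite set"
    and \<tau> :: "'q::finite \<Rightarrow> 'ap set \<Rightarrow> 'q"
    and F :: "'q set"
    and \<delta> :: real
    and \<mu>s :: "'x \<times> 'q \<Rightarrow> 'u measure"
  assumes kernel: "(\<lambda>(x, u). t x u) \<in> borel \<rightarrow>\<^sub>M prob_algebra borel"
    and h_meas: "h \<in> borel_measurable borel"
    and Lab_meas: "Lab \<in> borel \<rightarrow>\<^sub>M count_space UNIV"
    and delta_pos: "\<delta> > 0"
    and mus_policy: "policy \<mu>s"
    and mus_opt: "Tmu_delta t h Lab \<tau> F \<delta> \<mu>s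
                    (\<lambda>z. lim (\<lambda>l. (Tstar_delta t h Lab \<tau> F \<delta> ^^ l) (\<lambda>_. 0) z))
                  = Tstar_delta t h Lab \<tau> F \<delta>
                    (\<lambda>z. lim (\<lambda>l. (Tstar_delta t h Lab \<tau> F \<delta> ^^ l) (\<lambda>_. 0) z))"
  shows "\<forall>z. (\<lambda>l. (Tmu_delta t h Lab \<tau> F \<delta> \<mu>s ^^ l) (\<lambda>_. 0) z)
              \<longlonglongrightarrow> lim (\<lambda>l. (Tstar_delta t h Lab \<tau> F \<delta> ^^ l) (\<lambda>_. 0) z)"
proof -
  have PT: "\<And>x u. prob_space (t x u)"
    using kernel by (rule prob_space_kernel) simp
  interpret G: robust_operator "Tmu t h Lab \<tau> F \<mu>s" \<delta>
    using PT policy_prob_space[OF mus_policy] delta_pos by (rule robust_operator_Tmu)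
  interpret S: mono_unit_operator "Tstar_delta t h Lab \<tau> F \<delta>"
    using PT mus_policy by (rule mono_unit_operator_Tstar_delta)
  have G_eq: "Tmu_delta t h Lab \<tau> F \<delta> \<mu>s = G.robust"
    using G.robust_operator_axioms by (rule Tmu_delta_eq_robust)
  define V where "V = (\<lambda>z. lim (\<lambda>l. (Tstar_delta t h Lab \<tau> F \<delta> ^^ l) (\<lambda>_. 0) z))"
  have post: "V z \<le> G.robust V z" for z
    using S.lim_iterate_le_step[of z] mus_opt by (simp add: V_def G_eq)
  have G_le_S: "G.robust W z \<le> Tstar_delta t h Lab \<tau> F \<delta> W z" for W z
    using Tmu_delta_le_Tstar_delta[OF mus_policy, of t h Lab \<tau> F \<delta> W z] by (simp add: G_eq)
  have upper: "(G.robust ^^ n) (\<lambda>_. 0) z \<le> V z" for n z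
    using iterate_le_iterate[OF G.robust.mono_unit_operator_axioms S.mono_unit_operator_axioms G_le_S]
      S.iterate_le_lim
    unfolding V_def by (rule order_trans)
  have "(\<lambda>l. (G.robust ^^ l) (\<lambda>_. 0) z) \<longlonglongrightarrow> V z" for z
    using post upper by (rule G.iterate_tendsto)
  then show ?thesis
    by (simp add: G_eq V_def)
qed

end
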